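(* Let $b\in\mathbb{R}$, $\lambda>0$, $E=\{x_2>0\}$, and let $S_b(-\lambda)$ be the integral operator on $L^2(E)$ with kernel $$S_b(-\lambda)(\mathbf{x},\mathbf{y})=\mathrm{e}^{\mathrm{i} b\phi(\mathbf{x},\mathbf{y})}\frac1{2\pi}\big(K_0(\sqrt\lambda|\mathbf{x}-\mathbf{y}|)-K_0(\sqrt\lambda|\mathbf{x}-\mathbf{y}^*|)\big).$$ Then $S_b(-\lambda)$ is a bounded self-adjoint operator on $L^2(E)$ and is also bounded as an operator from $L^2(E)$ to $L^\infty(E)$.
   Context: $\phi(\mathbf{x},\mathbf{y})=\tfrac12(y_1-x_1)(x_2+y_2)$, $\mathbf{y}^*=(y_1,-y_2)$, and $K_0$ is the Macdonald function (modified Bessel function of the second kind of order $0$). *)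

theory Defs
  imports "HOL-Analysis.Analysis"
begin

text \<open>Macdonald function K_0 via its standard integral representation (for r > 0):
  K_0(r) = integral over t in (0,inf) of exp(- r cosh t).\<close>
definition K0 :: "real \<Rightarrow> real" where
  "K0 r = (LBINT t:{0<..}. exp (- r * cosh t))"

definition halfplane :: "(real \<times> real) set" where
  "halfplane = {x. snd x > 0}"

definition phi :: "real \<times> real \<Rightarrow> real \<times> real \<Rightarrow> real" where
  "phi x y = (1/2) * (fst y - fst x) * (snd x + snd y)"

definition refl_star :: "real \<times> real \<Rightarrow> real \<times> real" where
  "refl_star y = (fst y, - snd y)"

definition Sb_kernel :: "real \<Rightarrow> real \<Rightarrow> real \<times> real \<Rightarrow> real \<times> real \<Rightarrow> complex" where
  "Sb_kernel b lam x y =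
     exp (\<i> * complex_of_real (b * phi x y)) *
     complex_of_real ((1 / (2 * pi)) *
        (K0 (sqrt lam * dist x y) - K0 (sqrt lam * dist x (refl_star y))))"

definition mE :: "(real \<times> real) measure" where
  "mE = restrict_space lborel halfplane"

definition L2 :: "(real \<times> real) measure \<Rightarrow> ((real \<times> real) \<Rightarrow> complex) set" where
  "L2 M = {f. f \<in> borel_measurable M \<and> integrable M (\<lambda>x. (cmod (f x))\<^sup>2)}"

definition L2norm :: "(real \<times> real) measure \<Rightarrow> ((real \<times> real) \<Rightarrow> complex) \<Rightarrow> real" where
  "L2norm M f = sqrt (\<integral>x. (cmod (f x))\<^sup>2 \<partial>M)"

definition intop :: "(real \<times> real) measure \<Rightarrow> (real \<times> real \<Rightarrow> real \<times> real \<Rightarrow> complex)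
    \<Rightarrow> ((real \<times> real) \<Rightarrow> complex) \<Rightarrow> (real \<times> real) \<Rightarrow> complex" where
  "intop M k f x = (\<integral>y. k x y * f y \<partial>M)"

definition bounded_L2_intop :: "(real \<times> real) measure \<Rightarrow> (real \<times> real \<Rightarrow> real \<times> real \<Rightarrow> complex) \<Rightarrow> bool" where
  "bounded_L2_intop M k \<longleftrightarrow> (\<exists>C. \<forall>f\<in>L2 M.
      (AE x in M. integrable M (\<lambda>y. k x y * f y)) \<and>
      intop M k f \<in> L2 M \<and> L2norm M (intop M k f) \<le> C * L2norm M f)"

definition selfadjoint_L2_intop :: "(real \<times> real) measure \<Rightarrow> (real \<times> real \<Rightarrow> real \<times> real \<Rightarrow> complex) \<Rightarrow> bool" where
  "selfadjoint_L2_intop M k \<longleftrightarrow> (\<forall>f\<in>L2 M. \<forall>g\<in>L2 M.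
      (\<integral>x. intop M k f x * cnj (g x) \<partial>M) = (\<integral>x. f x * cnj (intop M k g x) \<partial>M))"

definition bounded_L2_Linf_intop :: "(real \<times> real) measure \<Rightarrow> (real \<times> real \<Rightarrow> real \<times> real \<Rightarrow> complex) \<Rightarrow> bool" where
  "bounded_L2_Linf_intop M k \<longleftrightarrow> (\<exists>C. \<forall>f\<in>L2 M.
      (AE x in M. integrable M (\<lambda>y. k x y * f y)) \<and>
      intop M k f \<in> borel_measurable M \<and>
      (AE x in M. cmod (intop M k f x) \<le> C * L2norm M f))"

end

theory Submission
  imports Defs "HOL-Probability.Sinc_Integral"
begin

(*
  A Schur test. On the half plane |x - y| <= |x - y*|, and K0 is nonnegative and decreasing,
  so whatever the magnetic phase, |S_b(-lambda)(x,y)| <= K0(sqrt lambda |x - y|) / (2 pi).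
  Since K0(r) <= 4 (r/4)^(-1/4) e^(-r/2), this majorant is H(x,y) = h(|x - y|) with a profile h
  that is integrable and square integrable on R^2: r^(-q) e^(-a r) with q < 1 is dominated by a
  product of one-dimensional Gamma-type weights in the two coordinates. Schur's test with
  sup_x int H(x,.) = sup_y int H(.,y) < infinity gives boundedness on L^2, Cauchy-Schwarz with
  sup_x ||H(x,.)||_2 < infinity gives boundedness from L^2 to L^infinity, and self-adjointness
  follows from Fubini and the Hermitian symmetry S(y,x) = conj S(x,y), which holds because phi
  is antisymmetric and |y - x*| = |x - y*|.
*)

section \<open>Bounds on the Macdonald function\<close>

lemma exp_neg_le_powr_neg_quarter:
  fixes v :: real
  assumes "0 < v"
  shows "exp (- v) \<le> v powr (-1/4)"
proof -
  have "v powr (1/4) \<le> exp v"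
  proof (cases "v \<le> 1")
    case True
    then have "v powr (1/4) \<le> 1" using assms by (simp add: powr_le1)
    then show ?thesis using assms by (meson one_le_exp_iff less_imp_le order_trans)
  next
    case False
    then have "v powr (1/4) \<le> v powr 1" by (intro powr_mono) auto
    also have "\<dots> = v" using assms by simp
    also have "v \<le> exp v" using exp_ge_add_one_self[of v] by linarith
    finally show ?thesis .
  qed
  then have "inverse (exp v) \<le> inverse (v powr (1/4))"
    using assms by (intro le_imp_inverse_le) auto
  then show ?thesis by (simp add: exp_minus powr_minus)
qed

lemma borel_measurable_cosh [measurable]: "(cosh :: real \<Rightarrow> real) \<in> borel_measurable borel"
  by (intro borel_measurable_continuous_onI continuous_intros)

lemma K0_integrand_le:
  fixes r t :: real
  assumes "0 < r"
  shows "exp (- r * cosh t) \<le> (r/4) powr (-1/4) * exp (- r/2) * exp (- t/4)"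
proof -
  \<comment> \<open>one half of r cosh t gives the factor e^(-r/2), the other half the decay in t\<close>
  have "1 \<le> cosh t" "exp t / 2 \<le> cosh t"
    by (rule cosh_real_ge_1) (simp add: cosh_def)
  then have "r/2 * 1 + r/2 * (exp t / 2) \<le> r/2 * cosh t + r/2 * cosh t"
    using assms by (intro add_mono mult_left_mono) auto
  then have "r/2 + r/4 * exp t \<le> r * cosh t" by simp
  then have "exp (- r * cosh t) \<le> exp (- r/2) * exp (- (r/4 * exp t))"
    by (simp flip: exp_add)
  also have "exp (- (r/4 * exp t)) \<le> (r/4 * exp t) powr (-1/4)"
    using assms by (intro exp_neg_le_powr_neg_quarter) simp
  also have "(r/4 * exp t) powr (-1/4) = (r/4) powr (-1/4) * exp (- t/4)"
    using assms by (subst powr_mult) (auto simp: powr_def)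
  finally show ?thesis using assms by (simp add: mult_left_mono ac_simps)
qed

lemma set_integrable_K0_integrand:
  fixes r :: real
  assumes "0 < r"
  shows "set_integrable lborel {0<..} (\<lambda>t. exp (- r * cosh t))"
proof (rule set_integrable_bound)
  show "set_integrable lborel {0<..} (\<lambda>t. (r/4) powr (-1/4) * exp (- r/2) * exp (- (t * (1/4))))"
    by (intro set_integrable_mult_right integrable_I0i_exp_mscale) simp
  show "set_borel_measurable lborel {0<..} (\<lambda>t. exp (- r * cosh t))"
    unfolding set_borel_measurable_def by measurable
  show "AE t in lborel. t \<in> {0<..} \<longrightarrow>
      norm (exp (- r * cosh t)) \<le> norm ((r/4) powr (-1/4) * exp (- r/2) * exp (- (t * (1/4))))"
    using K0_integrand_le[OF assms] by (intro AE_I2) (simp add: abs_mult)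
qed

lemma K0_nonneg: "0 \<le> K0 r"
  unfolding K0_def set_lebesgue_integral_def
  by (intro Bochner_Integration.integral_nonneg) (simp add: indicator_def)

lemma K0_le:
  fixes r :: real
  assumes "0 < r"
  shows "K0 r \<le> 4 * (r/4) powr (-1/4) * exp (- r/2)"
proof -
  have "K0 r \<le> (LINT t:{0<..}|lborel. (r/4) powr (-1/4) * exp (- r/2) * exp (- (t * (1/4))))"
    unfolding K0_def using K0_integrand_le[OF assms]
    by (intro set_integral_mono set_integrable_K0_integrand assms
          set_integrable_mult_right integrable_I0i_exp_mscale) simp_all
  also have "\<dots> = (r/4) powr (-1/4) * exp (- r/2) * 4"
    using LBINT_I0i_exp_mscale[of "1/4"] by (simp add: interval_lebesgue_integral_0_infty)
  finally show ?thesis by simp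
qed

lemma K0_antimono:
  fixes r s :: real
  assumes "0 < r" "r \<le> s"
  shows "K0 s \<le> K0 r"
  unfolding K0_def using assms cosh_real_ge_1
  by (intro set_integral_mono set_integrable_K0_integrand) (auto intro: mult_right_mono)

lemma borel_measurable_K0 [measurable]: "K0 \<in> borel_measurable borel"
  unfolding K0_def[abs_def] set_lebesgue_integral_def by measurable

section \<open>Integrability of the radial majorant\<close>

definition decay_profile :: "real \<Rightarrow> real \<Rightarrow> real \<Rightarrow> real" where
  "decay_profile q a r = r powr (- q) * exp (- a * r)"

lemma decay_profile_nonneg: "0 \<le> decay_profile q a r"
  unfolding decay_profile_def by simp

lemma borel_measurable_decay_profile [measurable]: "decay_profile q a \<in> borel_measurable borel"
  unfolding decay_profile_def[abs_def] by measurable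

lemma decay_profile_power2:
  assumes "0 \<le> r"
  shows "(decay_profile q a r)\<^sup>2 = decay_profile (2 * q) (2 * a) r"
proof -
  have "(r powr (- q))\<^sup>2 = r powr (- (2 * q))"
    by (simp add: power2_eq_square flip: powr_add)
  moreover have "(exp (- a * r))\<^sup>2 = exp (- (2 * a) * r)"
    by (simp add: power2_eq_square flip: exp_add)
  ultimately show ?thesis by (simp add: decay_profile_def power_mult_distrib)
qed

definition decay_weight :: "real \<Rightarrow> real \<Rightarrow> real \<Rightarrow> real" where
  "decay_weight q c t = (t powr (- q) + 1) * exp (- c * t)"

lemma decay_weight_nonneg: "0 \<le> decay_weight q c t"
  unfolding decay_weight_def by (intro mult_nonneg_nonneg add_nonneg_nonneg) auto

lemma borel_measurable_decay_weight [measurable]: "decay_weight q c \<in> borel_measurable borel"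
  unfolding decay_weight_def[abs_def] by measurable

lemma decay_profile_norm_le_decay_weight:
  fixes z :: "real \<times> real"
  assumes q: "0 \<le> q" and a: "0 < a"
  shows "decay_profile q a (norm z) \<le> decay_weight q (a/2) \<bar>fst z\<bar> * decay_weight q (a/2) \<bar>snd z\<bar>"
proof (cases "z = 0")
  case True
  then show ?thesis by (simp add: decay_profile_def decay_weight_nonneg)
next
  case False
  have fst_le: "\<bar>fst z\<bar> \<le> norm z" and snd_le: "\<bar>snd z\<bar> \<le> norm z"
    by (cases z; simp add: norm_Pair real_le_rsqrt)+
  \<comment> \<open>use a nonzero coordinate, since 0 powr (- q) = 0\<close>
  have "norm z powr (- q) \<le> \<bar>fst z\<bar> powr (- q) + \<bar>snd z\<bar> powr (- q)"
  proof (cases "fst z = 0")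
    case True
    then have "snd z \<noteq> 0" using False by (cases z) (auto simp: zero_prod_def)
    then show ?thesis using snd_le q by (simp add: add_increasing powr_mono2')
  next
    case False
    then show ?thesis using fst_le q by (simp add: add_increasing2 powr_mono2')
  qed
  also have "\<dots> \<le> (\<bar>fst z\<bar> powr (- q) + 1) * (\<bar>snd z\<bar> powr (- q) + 1)"
    by (simp add: algebra_simps add_increasing)
  finally have powr_le: "norm z powr (- q) \<le> (\<bar>fst z\<bar> powr (- q) + 1) * (\<bar>snd z\<bar> powr (- q) + 1)" .
  have "a/2 * (\<bar>fst z\<bar> + \<bar>snd z\<bar>) \<le> a/2 * (2 * norm z)"
    using fst_le snd_le a by (intro mult_left_mono) auto
  then have exp_le: "exp (- a * norm z) \<le> exp (- (a/2) * \<bar>fst z\<bar>) * exp (- (a/2) * \<bar>snd z\<bar>)"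
    by (simp flip: exp_add add: algebra_simps)
  show ?thesis
    using mult_mono[OF powr_le exp_le] by (simp add: decay_profile_def decay_weight_def ac_simps)
qed

lemma nn_integral_halfline_powr_exp_finite:
  fixes c q :: real
  assumes c: "0 < c" and q: "q < 1"
  shows "(\<integral>\<^sup>+t. ennreal (t powr (- q) * exp (- c * t)) * indicator {0..} t \<partial>lborel) < \<infinity>"
proof -
  define F where "F t = ennreal (t powr (- q) / exp t) * indicator {0..} t" for t :: real
  have [measurable]: "F \<in> borel_measurable borel" unfolding F_def by measurable
  have "((\<lambda>t. t powr (- q) / exp t) has_integral Gamma (1 - q)) {0..}"
    using Gamma_integral_real[of "1 - q"] q by simp
  then have "integral\<^sup>N lborel F = ennreal (Gamma (1 - q))"
    unfolding F_def by (intro nn_integral_has_integral_lebesgue') simp_all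
  moreover have "integral\<^sup>N lborel F = ennreal c * (\<integral>\<^sup>+t. F (c * t) \<partial>lborel)"
    using nn_integral_real_affine[of F c 0] c by simp
  ultimately have "ennreal c * (\<integral>\<^sup>+t. F (c * t) \<partial>lborel) < \<infinity>" by simp
  then have F_finite: "(\<integral>\<^sup>+t. F (c * t) \<partial>lborel) < \<infinity>"
    using c by (auto simp: ennreal_mult_less_top)
  \<comment> \<open>the substitution s = c t turns the integral into the Gamma integral\<close>
  have "ennreal (t powr (- q) * exp (- c * t)) * indicator {0..} t = ennreal (c powr q) * F (c * t)" for t
  proof (cases "0 \<le> t")
    case True
    then have "t powr (- q) * exp (- c * t) = c powr q * ((c * t) powr (- q) / exp (c * t))"
      using c by (simp add: powr_mult powr_minus exp_minus field_simps)
    then show ?thesis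
      using True c by (simp add: F_def ennreal_mult'[symmetric] zero_le_mult_iff)
  qed (use c in \<open>simp add: F_def zero_le_mult_iff\<close>)
  then have "(\<integral>\<^sup>+t. ennreal (t powr (- q) * exp (- c * t)) * indicator {0..} t \<partial>lborel)
      = ennreal (c powr q) * (\<integral>\<^sup>+t. F (c * t) \<partial>lborel)"
    by (simp add: nn_integral_cmult)
  also have "\<dots> < \<infinity>" using F_finite by (simp add: ennreal_mult_less_top)
  finally show ?thesis .
qed

lemma nn_integral_halfline_decay_weight_finite:
  fixes c q :: real
  assumes c: "0 < c" and q: "q < 1"
  shows "(\<integral>\<^sup>+t. ennreal (decay_weight q c t) * indicator {0..} t \<partial>lborel) < \<infinity>"
proof -
  have "((\<lambda>t. exp (- c * t)) has_integral exp (- c * 0) / c) {0..}"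
    using has_integral_exp_minus_to_infinity[OF c] .
  then have exp_finite: "(\<integral>\<^sup>+t. ennreal (exp (- c * t)) * indicator {0..} t \<partial>lborel) < \<infinity>"
    by (subst nn_integral_has_integral_lebesgue') simp_all
  have "decay_weight q c t = t powr (- q) * exp (- c * t) + exp (- c * t)" for t
    by (simp add: decay_weight_def distrib_right)
  then have "(\<integral>\<^sup>+t. ennreal (decay_weight q c t) * indicator {0..} t \<partial>lborel)
      = (\<integral>\<^sup>+t. ennreal (t powr (- q) * exp (- c * t)) * indicator {0..} t
               + ennreal (exp (- c * t)) * indicator {0..} t \<partial>lborel)"
    by (intro nn_integral_cong) (simp split: split_indicator)
  also have "\<dots> = (\<integral>\<^sup>+t. ennreal (t powr (- q) * exp (- c * t)) * indicator {0..} t \<partial>lborel)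
      + (\<integral>\<^sup>+t. ennreal (exp (- c * t)) * indicator {0..} t \<partial>lborel)"
    by (rule nn_integral_add) measurable
  also have "\<dots> < \<infinity>"
    using nn_integral_halfline_powr_exp_finite[OF c q] exp_finite by simp
  finally show ?thesis .
qed

lemma nn_integral_abs_le_halfline:
  fixes f :: "real \<Rightarrow> ennreal"
  assumes [measurable]: "f \<in> borel_measurable borel"
  shows "(\<integral>\<^sup>+s. f \<bar>s\<bar> \<partial>lborel) \<le> 2 * (\<integral>\<^sup>+t. f t * indicator {0..} t \<partial>lborel)"
proof -
  have reflect: "(\<integral>\<^sup>+t. f (- t) * indicator {0..} (- t) \<partial>lborel) = (\<integral>\<^sup>+t. f t * indicator {0..} t \<partial>lborel)"
    using nn_integral_real_affine[of "\<lambda>t. f t * indicator {0..} t" "-1" 0] by simp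
  have "(\<integral>\<^sup>+s. f \<bar>s\<bar> \<partial>lborel)
      \<le> (\<integral>\<^sup>+s. f s * indicator {0..} s + f (- s) * indicator {0..} (- s) \<partial>lborel)"
    by (intro nn_integral_mono) (simp split: split_indicator)
  also have "\<dots> = 2 * (\<integral>\<^sup>+t. f t * indicator {0..} t \<partial>lborel)"
    by (simp add: nn_integral_add reflect mult_2)
  finally show ?thesis .
qed

lemma nn_integral_lborel_pair_mult:
  fixes f g :: "real \<Rightarrow> ennreal"
  assumes [measurable]: "f \<in> borel_measurable borel" "g \<in> borel_measurable borel"
  shows "(\<integral>\<^sup>+z. f (fst z) * g (snd z) \<partial>(lborel :: (real \<times> real) measure))
       = (\<integral>\<^sup>+x. f x \<partial>lborel) * (\<integral>\<^sup>+y. g y \<partial>lborel)"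
proof -
  have "(\<integral>\<^sup>+z. f (fst z) * g (snd z) \<partial>(lborel :: (real \<times> real) measure))
      = (\<integral>\<^sup>+x. (\<integral>\<^sup>+y. f x * g y \<partial>lborel) \<partial>lborel)"
    by (simp add: lborel_prod[symmetric] lborel.nn_integral_fst[symmetric] case_prod_beta')
  also have "\<dots> = (\<integral>\<^sup>+x. f x * (\<integral>\<^sup>+y. g y \<partial>lborel) \<partial>lborel)"
    by (simp add: nn_integral_cmult)
  finally show ?thesis by (simp add: nn_integral_multc)
qed

lemma nn_integral_decay_profile_norm_finite:
  assumes q: "0 \<le> q" "q < 1" and a: "0 < a"
  shows "(\<integral>\<^sup>+z. ennreal (decay_profile q a (norm z)) \<partial>(lborel :: (real \<times> real) measure)) < \<infinity>"
proof -
  define w where "w s = ennreal (decay_weight q (a/2) \<bar>s\<bar>)" for s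
  have [measurable]: "w \<in> borel_measurable borel" unfolding w_def by measurable
  have "(\<integral>\<^sup>+s. w s \<partial>lborel) \<le> 2 * (\<integral>\<^sup>+t. ennreal (decay_weight q (a/2) t) * indicator {0..} t \<partial>lborel)"
    unfolding w_def using nn_integral_abs_le_halfline[of "\<lambda>t. ennreal (decay_weight q (a/2) t)"]
    by simp
  also have "\<dots> < \<infinity>"
    using nn_integral_halfline_decay_weight_finite[of "a/2" q] q a by (simp add: ennreal_mult_less_top)
  finally have w_finite: "(\<integral>\<^sup>+s. w s \<partial>lborel) < \<infinity>" .
  have "(\<integral>\<^sup>+z. ennreal (decay_profile q a (norm z)) \<partial>(lborel :: (real \<times> real) measure))
      \<le> (\<integral>\<^sup>+z. w (fst z) * w (snd z) \<partial>(lborel :: (real \<times> real) measure))"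
    using decay_profile_norm_le_decay_weight[OF q(1) a]
    by (intro nn_integral_mono) (simp add: w_def ennreal_mult'[symmetric] decay_weight_nonneg)
  also have "\<dots> = (\<integral>\<^sup>+s. w s \<partial>lborel) * (\<integral>\<^sup>+s. w s \<partial>lborel)"
    by (rule nn_integral_lborel_pair_mult) measurable
  also have "\<dots> < \<infinity>" using w_finite by (simp add: ennreal_mult_less_top)
  finally show ?thesis .
qed

lemma nn_integral_lborel_dist:
  fixes x :: "'a::euclidean_space" and f :: "real \<Rightarrow> ennreal"
  assumes [measurable]: "f \<in> borel_measurable borel"
  shows "(\<integral>\<^sup>+y. f (dist x y) \<partial>lborel) = (\<integral>\<^sup>+z. f (norm z) \<partial>(lborel :: 'a measure))"
proof -
  have reflect: "distr lborel borel (\<lambda>y. x - y) = lborel"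
    using lborel_affine[of "-1" x] by (simp add: density_1)
  have "(\<integral>\<^sup>+y. f (dist x y) \<partial>lborel) = (\<integral>\<^sup>+z. f (norm z) \<partial>distr lborel borel (\<lambda>y. x - y))"
    by (simp add: nn_integral_distr dist_norm)
  then show ?thesis by (simp add: reflect)
qed

section \<open>Schur's test\<close>

lemma borel_measurable_L2: "f \<in> L2 M \<Longrightarrow> f \<in> borel_measurable M"
  by (simp add: L2_def)

lemma nn_integral_L2:
  assumes "f \<in> L2 M"
  shows "(\<integral>\<^sup>+x. ennreal ((cmod (f x))\<^sup>2) \<partial>M) = ennreal ((L2norm M f)\<^sup>2)"
  using assms by (simp add: L2_def L2norm_def nn_integral_eq_integral)

lemma L2I:
  assumes "f \<in> borel_measurable M" "(\<integral>\<^sup>+x. ennreal ((cmod (f x))\<^sup>2) \<partial>M) < \<infinity>"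
  shows "f \<in> L2 M"
  using assms by (simp add: L2_def integrable_iff_bounded)

lemma L2norm_nonneg: "0 \<le> L2norm M f"
  by (simp add: L2norm_def)

lemma borel_measurable_cnj [measurable]: "(cnj :: complex \<Rightarrow> complex) \<in> borel_measurable borel"
  by (intro borel_measurable_continuous_onI continuous_intros)

locale schur_test = sigma_finite_measure M for M :: "(real \<times> real) measure" +
  fixes k :: "real \<times> real \<Rightarrow> real \<times> real \<Rightarrow> complex"
    and H :: "real \<times> real \<Rightarrow> real \<times> real \<Rightarrow> real"
    and A B :: real
  assumes kernel_measurable [measurable]: "(\<lambda>(x, y). k x y) \<in> borel_measurable (M \<Otimes>\<^sub>M M)"
    and majorant_measurable [measurable]: "(\<lambda>(x, y). H x y) \<in> borel_measurable (M \<Otimes>\<^sub>M M)"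
    and majorant_nonneg: "\<And>x y. 0 \<le> H x y"
    and norm_kernel_le: "\<And>x. x \<in> space M \<Longrightarrow> AE y in M. cmod (k x y) \<le> H x y"
    and row_integral_le: "\<And>x. x \<in> space M \<Longrightarrow> (\<integral>\<^sup>+y. H x y \<partial>M) \<le> ennreal A"
    and column_integral_le: "\<And>y. y \<in> space M \<Longrightarrow> (\<integral>\<^sup>+x. H x y \<partial>M) \<le> ennreal A"
    and row_square_integral_le: "\<And>x. x \<in> space M \<Longrightarrow> (\<integral>\<^sup>+y. (H x y)\<^sup>2 \<partial>M) \<le> ennreal B"
    and A_nonneg: "0 \<le> A" and B_nonneg: "0 \<le> B"
begin

interpretation P: pair_sigma_finite M M ..

definition majorant_op :: "(real \<times> real \<Rightarrow> complex) \<Rightarrow> real \<times> real \<Rightarrow> ennreal" where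
  "majorant_op f x = (\<integral>\<^sup>+y. ennreal (H x y) * ennreal (cmod (f y)) \<partial>M)"

lemma borel_measurable_majorant_op [measurable]:
  assumes [measurable]: "f \<in> borel_measurable M"
  shows "majorant_op f \<in> borel_measurable M"
  unfolding majorant_op_def[abs_def] by measurable

lemma borel_measurable_intop [measurable]:
  assumes [measurable]: "f \<in> borel_measurable M"
  shows "intop M k f \<in> borel_measurable M"
  unfolding intop_def[abs_def] by measurable

lemma majorant_op_square_le:
  assumes f: "f \<in> L2 M" and x: "x \<in> space M"
  shows "(majorant_op f x)\<^sup>2 \<le> ennreal (B * (L2norm M f)\<^sup>2)"
proof -
  note [measurable] = borel_measurable_L2[OF f]
  have "(majorant_op f x)\<^sup>2 \<le> (\<integral>\<^sup>+y. ennreal (H x y) ^ 2 \<partial>M) * (\<integral>\<^sup>+y. ennreal (cmod (f y)) ^ 2 \<partial>M)"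
    unfolding majorant_op_def using x by (intro Cauchy_Schwarz_nn_integral) auto
  also have "\<dots> = (\<integral>\<^sup>+y. (H x y)\<^sup>2 \<partial>M) * ennreal ((L2norm M f)\<^sup>2)"
    by (simp add: ennreal_power majorant_nonneg nn_integral_L2[OF f, symmetric])
  also have "\<dots> \<le> ennreal B * ennreal ((L2norm M f)\<^sup>2)"
    by (intro mult_right_mono row_square_integral_le[OF x]) simp
  finally show ?thesis by (simp add: ennreal_mult B_nonneg)
qed

lemma majorant_op_finite:
  assumes "f \<in> L2 M" "x \<in> space M"
  shows "majorant_op f x < \<infinity>"
proof -
  have "(majorant_op f x)\<^sup>2 < \<infinity>"
    using majorant_op_square_le[OF assms] by (rule le_less_trans) simp
  then show ?thesis by (simp add: power_less_top_ennreal)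
qed

lemma nn_integral_norm_kernel_mult_le:
  assumes "x \<in> space M"
  shows "(\<integral>\<^sup>+y. ennreal (cmod (k x y * f y)) \<partial>M) \<le> majorant_op f x"
  unfolding majorant_op_def
  by (intro nn_integral_mono_AE, use norm_kernel_le[OF assms] in eventually_elim)
     (auto simp: norm_mult ennreal_mult'[symmetric] majorant_nonneg intro!: ennreal_leI mult_right_mono)

lemma integrable_kernel_mult:
  assumes f: "f \<in> L2 M" and x: "x \<in> space M"
  shows "integrable M (\<lambda>y. k x y * f y)"
proof -
  note [measurable] = borel_measurable_L2[OF f]
  have "(\<integral>\<^sup>+y. ennreal (cmod (k x y * f y)) \<partial>M) < \<infinity>"
    using nn_integral_norm_kernel_mult_le[OF x] majorant_op_finite[OF f x] by (rule le_less_trans)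
  then show ?thesis
    unfolding integrable_iff_bounded using x by simp
qed

lemma norm_intop_le_majorant_op:
  assumes f: "f \<in> L2 M" and x: "x \<in> space M"
  shows "ennreal (cmod (intop M k f x)) \<le> majorant_op f x"
  unfolding intop_def
  using integral_norm_bound_ennreal[OF integrable_kernel_mult[OF f x]] nn_integral_norm_kernel_mult_le[OF x]
  by (rule order_trans)

lemma norm_intop_square_le_majorant_op:
  assumes "f \<in> L2 M" "x \<in> space M"
  shows "ennreal ((cmod (intop M k f x))\<^sup>2) \<le> (majorant_op f x)\<^sup>2"
  using norm_intop_le_majorant_op[OF assms]
  by (subst ennreal_power[symmetric]) (auto intro: power_mono)

lemma majorant_op_square_le_weighted:
  assumes f: "f \<in> L2 M" and x: "x \<in> space M"
  shows "(majorant_op f x)\<^sup>2 \<le> ennreal A * (\<integral>\<^sup>+y. ennreal (H x y) * ennreal ((cmod (f y))\<^sup>2) \<partial>M)"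
proof -
  note [measurable] = borel_measurable_L2[OF f]
  \<comment> \<open>Schur's trick: split H |f| = sqrt H (sqrt H |f|) before Cauchy-Schwarz\<close>
  have "(majorant_op f x)\<^sup>2
      = (\<integral>\<^sup>+y. ennreal (sqrt (H x y)) * (ennreal (sqrt (H x y)) * ennreal (cmod (f y))) \<partial>M)\<^sup>2"
    unfolding majorant_op_def
    by (simp add: mult.assoc[symmetric] ennreal_mult'[symmetric] majorant_nonneg)
  also have "\<dots> \<le> (\<integral>\<^sup>+y. ennreal (sqrt (H x y)) ^ 2 \<partial>M)
      * (\<integral>\<^sup>+y. (ennreal (sqrt (H x y)) * ennreal (cmod (f y))) ^ 2 \<partial>M)"
    using x by (intro Cauchy_Schwarz_nn_integral) auto
  also have "\<dots> = (\<integral>\<^sup>+y. H x y \<partial>M) * (\<integral>\<^sup>+y. ennreal (H x y) * ennreal ((cmod (f y))\<^sup>2) \<partial>M)"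
    by (simp add: ennreal_power majorant_nonneg power_mult_distrib)
  also have "\<dots> \<le> ennreal A * (\<integral>\<^sup>+y. ennreal (H x y) * ennreal ((cmod (f y))\<^sup>2) \<partial>M)"
    using row_integral_le[OF x] by (intro mult_right_mono) auto
  finally show ?thesis .
qed

lemma nn_integral_majorant_op_square_le:
  assumes f: "f \<in> L2 M"
  shows "(\<integral>\<^sup>+x. (majorant_op f x)\<^sup>2 \<partial>M) \<le> ennreal ((A * L2norm M f)\<^sup>2)"
proof -
  note [measurable] = borel_measurable_L2[OF f]
  have "(\<integral>\<^sup>+x. (\<integral>\<^sup>+y. ennreal (H x y) * ennreal ((cmod (f y))\<^sup>2) \<partial>M) \<partial>M)
      = (\<integral>\<^sup>+y. (\<integral>\<^sup>+x. ennreal (H x y) * ennreal ((cmod (f y))\<^sup>2) \<partial>M) \<partial>M)"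
    by (rule P.Fubini'[symmetric]) measurable
  also have "\<dots> = (\<integral>\<^sup>+y. (\<integral>\<^sup>+x. ennreal (H x y) \<partial>M) * ennreal ((cmod (f y))\<^sup>2) \<partial>M)"
    by (intro nn_integral_cong nn_integral_multc) measurable
  finally have swap: "(\<integral>\<^sup>+x. (\<integral>\<^sup>+y. ennreal (H x y) * ennreal ((cmod (f y))\<^sup>2) \<partial>M) \<partial>M)
      = (\<integral>\<^sup>+y. (\<integral>\<^sup>+x. ennreal (H x y) \<partial>M) * ennreal ((cmod (f y))\<^sup>2) \<partial>M)" .
  have "(\<integral>\<^sup>+x. (majorant_op f x)\<^sup>2 \<partial>M)
      \<le> (\<integral>\<^sup>+x. ennreal A * (\<integral>\<^sup>+y. ennreal (H x y) * ennreal ((cmod (f y))\<^sup>2) \<partial>M) \<partial>M)"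
    using majorant_op_square_le_weighted[OF f] by (intro nn_integral_mono) auto
  also have "\<dots> = ennreal A * (\<integral>\<^sup>+y. (\<integral>\<^sup>+x. ennreal (H x y) \<partial>M) * ennreal ((cmod (f y))\<^sup>2) \<partial>M)"
    unfolding swap[symmetric] by (rule nn_integral_cmult) measurable
  also have "\<dots> \<le> ennreal A * (\<integral>\<^sup>+y. ennreal A * ennreal ((cmod (f y))\<^sup>2) \<partial>M)"
    using column_integral_le by (intro mult_left_mono nn_integral_mono mult_right_mono) auto
  also have "\<dots> = ennreal A * (ennreal A * (\<integral>\<^sup>+y. ennreal ((cmod (f y))\<^sup>2) \<partial>M))"
    by (subst nn_integral_cmult) auto
  also have "\<dots> = ennreal ((A * L2norm M f)\<^sup>2)"
    unfolding nn_integral_L2[OF f]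
    by (simp add: A_nonneg ennreal_mult'[symmetric] power_mult_distrib power2_eq_square mult_ac)
  finally show ?thesis .
qed

theorem bounded_L2_Linf: "bounded_L2_Linf_intop M k"
  unfolding bounded_L2_Linf_intop_def
proof (intro exI[of _ "sqrt B"] ballI conjI)
  fix f assume f: "f \<in> L2 M"
  show "AE x in M. integrable M (\<lambda>y. k x y * f y)"
    using integrable_kernel_mult[OF f] by (intro AE_I2)
  show "intop M k f \<in> borel_measurable M"
    using borel_measurable_L2[OF f] by measurable
  show "AE x in M. cmod (intop M k f x) \<le> sqrt B * L2norm M f"
  proof (intro AE_I2)
    fix x assume x: "x \<in> space M"
    have "ennreal ((cmod (intop M k f x))\<^sup>2) \<le> (majorant_op f x)\<^sup>2"
      by (rule norm_intop_square_le_majorant_op[OF f x])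
    also have "\<dots> \<le> ennreal ((sqrt B * L2norm M f)\<^sup>2)"
      using majorant_op_square_le[OF f x] by (simp add: power_mult_distrib B_nonneg)
    finally have "(cmod (intop M k f x))\<^sup>2 \<le> (sqrt B * L2norm M f)\<^sup>2"
      by simp
    then show "cmod (intop M k f x) \<le> sqrt B * L2norm M f"
      by (rule power2_le_imp_le) (simp add: B_nonneg L2norm_nonneg)
  qed
qed

theorem bounded_L2: "bounded_L2_intop M k"
  unfolding bounded_L2_intop_def
proof (intro exI[of _ A] ballI conjI)
  fix f assume f: "f \<in> L2 M"
  note [measurable] = borel_measurable_L2[OF f]
  show "AE x in M. integrable M (\<lambda>y. k x y * f y)"
    using integrable_kernel_mult[OF f] by (intro AE_I2)
  have "(\<integral>\<^sup>+x. ennreal ((cmod (intop M k f x))\<^sup>2) \<partial>M) \<le> (\<integral>\<^sup>+x. (majorant_op f x)\<^sup>2 \<partial>M)"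
    using norm_intop_square_le_majorant_op[OF f] by (intro nn_integral_mono)
  also have "\<dots> \<le> ennreal ((A * L2norm M f)\<^sup>2)"
    by (rule nn_integral_majorant_op_square_le[OF f])
  finally have le: "(\<integral>\<^sup>+x. ennreal ((cmod (intop M k f x))\<^sup>2) \<partial>M) \<le> ennreal ((A * L2norm M f)\<^sup>2)" .
  then have "(\<integral>\<^sup>+x. ennreal ((cmod (intop M k f x))\<^sup>2) \<partial>M) < \<infinity>"
    by (rule le_less_trans) simp
  then show Sf: "intop M k f \<in> L2 M"
    by (rule L2I[rotated]) measurable
  have "(L2norm M (intop M k f))\<^sup>2 \<le> (A * L2norm M f)\<^sup>2"
    using le unfolding nn_integral_L2[OF Sf] by simp
  then show "L2norm M (intop M k f) \<le> A * L2norm M f"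
    by (rule power2_le_imp_le) (simp add: A_nonneg L2norm_nonneg)
qed

lemma integrable_kernel_sesquilinear:
  assumes f: "f \<in> L2 M" and g: "g \<in> L2 M"
  shows "integrable (M \<Otimes>\<^sub>M M) (\<lambda>(x, y). k x y * f y * cnj (g x))"
proof -
  note [measurable] = borel_measurable_L2[OF f] borel_measurable_L2[OF g]
  have "(\<integral>\<^sup>+p. ennreal (cmod (case p of (x, y) \<Rightarrow> k x y * f y * cnj (g x))) \<partial>(M \<Otimes>\<^sub>M M))
      = (\<integral>\<^sup>+x. (\<integral>\<^sup>+y. ennreal (cmod (k x y * f y * cnj (g x))) \<partial>M) \<partial>M)"
    by (subst nn_integral_fst[symmetric]) (simp_all add: case_prod_beta)
  also have "\<dots> \<le> (\<integral>\<^sup>+x. ennreal (cmod (g x)) * majorant_op f x \<partial>M)"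
  proof (intro nn_integral_mono)
    fix x assume x: "x \<in> space M"
    have "(\<integral>\<^sup>+y. ennreal (cmod (k x y * f y * cnj (g x))) \<partial>M)
        = ennreal (cmod (g x)) * (\<integral>\<^sup>+y. ennreal (cmod (k x y * f y)) \<partial>M)"
      by (subst nn_integral_cmult[symmetric]) (auto simp: x norm_mult ennreal_mult'[symmetric] mult_ac)
    also have "\<dots> \<le> ennreal (cmod (g x)) * majorant_op f x"
      using nn_integral_norm_kernel_mult_le[OF x] by (rule mult_left_mono) simp
    finally show "(\<integral>\<^sup>+y. ennreal (cmod (k x y * f y * cnj (g x))) \<partial>M)
        \<le> ennreal (cmod (g x)) * majorant_op f x" .
  qed
  also have "\<dots> < \<infinity>"
  proof -
    have g_norm: "(\<integral>\<^sup>+x. ennreal (cmod (g x)) ^ 2 \<partial>M) = ennreal ((L2norm M g)\<^sup>2)"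
      using nn_integral_L2[OF g] by (simp add: ennreal_power)
    have "(\<integral>\<^sup>+x. ennreal (cmod (g x)) * majorant_op f x \<partial>M)\<^sup>2
        \<le> (\<integral>\<^sup>+x. ennreal (cmod (g x)) ^ 2 \<partial>M) * (\<integral>\<^sup>+x. (majorant_op f x) ^ 2 \<partial>M)"
      by (intro Cauchy_Schwarz_nn_integral) measurable
    also have "\<dots> \<le> ennreal ((L2norm M g)\<^sup>2) * ennreal ((A * L2norm M f)\<^sup>2)"
      unfolding g_norm by (intro mult_left_mono nn_integral_majorant_op_square_le[OF f]) simp
    also have "\<dots> < \<infinity>" by (simp flip: ennreal_mult)
    finally show ?thesis by (simp add: power_less_top_ennreal)
  qed
  finally have "(\<integral>\<^sup>+p. ennreal (cmod (case p of (x, y) \<Rightarrow> k x y * f y * cnj (g x))) \<partial>(M \<Otimes>\<^sub>M M)) < \<infinity>" .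
  moreover have "(\<lambda>(x, y). k x y * f y * cnj (g x)) \<in> borel_measurable (M \<Otimes>\<^sub>M M)"
    by measurable
  ultimately show ?thesis
    by (intro integrableI_bounded)
qed

theorem selfadjoint:
  assumes hermitian: "\<And>x y. x \<in> space M \<Longrightarrow> y \<in> space M \<Longrightarrow> k y x = cnj (k x y)"
  shows "selfadjoint_L2_intop M k"
  unfolding selfadjoint_L2_intop_def
proof (intro ballI)
  fix f g assume f: "f \<in> L2 M" and g: "g \<in> L2 M"
  note int = integrable_kernel_sesquilinear[OF f g]
  have "(\<integral>x. intop M k f x * cnj (g x) \<partial>M) = (\<integral>x. (\<integral>y. k x y * f y * cnj (g x) \<partial>M) \<partial>M)"
    unfolding intop_def by simp
  also have "\<dots> = integral\<^sup>L (M \<Otimes>\<^sub>M M) (\<lambda>(x, y). k x y * f y * cnj (g x))"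
    by (rule P.integral_fst[OF int])
  also have "\<dots> = (\<integral>y. (\<integral>x. k x y * f y * cnj (g x) \<partial>M) \<partial>M)"
    by (rule P.integral_snd[OF int, symmetric])
  also have "\<dots> = (\<integral>y. f y * cnj (intop M k g y) \<partial>M)"
  proof (intro Bochner_Integration.integral_cong refl)
    fix y assume y: "y \<in> space M"
    have "f y * cnj (intop M k g y) = f y * (\<integral>x. cnj (k y x * g x) \<partial>M)"
      unfolding intop_def by (simp only: Bochner_Integration.integral_cnj)
    also have "\<dots> = (\<integral>x. f y * cnj (k y x * g x) \<partial>M)"
      by (rule integral_mult_right_zero[symmetric])
    also have "\<dots> = (\<integral>x. k x y * f y * cnj (g x) \<partial>M)"
      by (intro Bochner_Integration.integral_cong) (simp_all add: hermitian[OF _ y])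
    finally show "(\<integral>x. k x y * f y * cnj (g x) \<partial>M) = f y * cnj (intop M k g y)" ..
  qed
  finally show "(\<integral>x. intop M k f x * cnj (g x) \<partial>M) = (\<integral>x. f x * cnj (intop M k g x) \<partial>M)" .
qed

end

section \<open>The kernel on the half plane\<close>

lemma sets_halfplane [measurable]: "halfplane \<in> sets borel"
  unfolding halfplane_def by (intro borel_open open_Collect_less continuous_intros)

lemma space_mE [simp]: "space mE = halfplane"
  by (simp add: mE_def space_restrict_space)

lemma sigma_finite_mE: "sigma_finite_measure mE"
  unfolding mE_def
  by (rule sigma_finite_measure_restrict_space) (simp_all add: lborel.sigma_finite_measure_axioms)

lemma borel_measurable_mE_pair:
  assumes "g \<in> borel_measurable borel"
  shows "g \<in> borel_measurable (mE \<Otimes>\<^sub>M mE)"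
proof -
  have id_mE: "(\<lambda>x. x) \<in> mE \<rightarrow>\<^sub>M borel"
    unfolding mE_def by (intro measurable_restrict_space1) simp
  have "(\<lambda>p. (fst p, snd p)) \<in> (mE \<Otimes>\<^sub>M mE) \<rightarrow>\<^sub>M (borel \<Otimes>\<^sub>M borel)"
    by (intro measurable_Pair measurable_compose[OF measurable_fst id_mE]
        measurable_compose[OF measurable_snd id_mE])
  then show ?thesis
    using measurable_compose[OF _ assms] by (simp add: borel_prod)
qed

lemma nn_integral_mE_dist_le:
  fixes f :: "real \<Rightarrow> real"
  assumes [measurable]: "f \<in> borel_measurable borel"
  shows "(\<integral>\<^sup>+y. ennreal (f (dist x y)) \<partial>mE) \<le> (\<integral>\<^sup>+z. ennreal (f (norm z)) \<partial>(lborel :: (real \<times> real) measure))"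
proof -
  have "(\<integral>\<^sup>+y. ennreal (f (dist x y)) \<partial>mE) \<le> (\<integral>\<^sup>+y. ennreal (f (dist x y)) \<partial>lborel)"
    unfolding mE_def
    using sets_halfplane
    by (subst nn_integral_restrict_space) (auto intro!: nn_integral_mono split: split_indicator)
  also have "\<dots> = (\<integral>\<^sup>+z. ennreal (f (norm z)) \<partial>(lborel :: (real \<times> real) measure))"
    by (rule nn_integral_lborel_dist[where f="\<lambda>r. ennreal (f r)"]) measurable
  finally show ?thesis .
qed

lemma dist_le_dist_refl_star:
  assumes "x \<in> halfplane" "y \<in> halfplane"
  shows "dist x y \<le> dist x (refl_star y)"
proof -
  obtain x1 x2 y1 y2 where xy: "x = (x1, x2)" "y = (y1, y2)" by (cases x, cases y)
  have "0 < x2" "0 < y2" using assms xy by (auto simp: halfplane_def)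
  then have "(dist x2 y2)\<^sup>2 \<le> (dist x2 (- y2))\<^sup>2"
    by (simp add: dist_real_def power2_eq_square algebra_simps)
  then show ?thesis unfolding xy refl_star_def by (simp add: dist_Pair_Pair)
qed

lemma Sb_kernel_hermitian: "Sb_kernel b lam y x = cnj (Sb_kernel b lam x y)"
proof -
  have "phi y x = - phi x y" unfolding phi_def by (simp add: field_simps)
  then have phase: "exp (\<i> * complex_of_real (b * phi y x)) = cnj (exp (\<i> * complex_of_real (b * phi x y)))"
    by (simp add: exp_cnj)
  have "dist y (refl_star x) = dist x (refl_star y)"
    unfolding refl_star_def
    by (cases x, cases y) (simp add: dist_Pair_Pair dist_real_def abs_minus_commute add.commute)
  then show ?thesis
    by (simp only: Sb_kernel_def phase dist_commute[of y x] complex_cnj_mult complex_cnj_complex_of_real)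
qed

lemma borel_measurable_Sb_kernel: "(\<lambda>(x, y). Sb_kernel b lam x y) \<in> borel_measurable borel"
proof -
  have [measurable]:
    "(\<lambda>p::(real \<times> real) \<times> (real \<times> real). sqrt lam * dist (fst p) (snd p)) \<in> borel_measurable borel"
    "(\<lambda>p::(real \<times> real) \<times> (real \<times> real). sqrt lam * dist (fst p) (refl_star (snd p))) \<in> borel_measurable borel"
    "(\<lambda>p::(real \<times> real) \<times> (real \<times> real). exp (\<i> * complex_of_real (b * phi (fst p) (snd p)))) \<in> borel_measurable borel"
    unfolding refl_star_def phi_def by (intro borel_measurable_continuous_onI continuous_intros)+
  show ?thesis unfolding Sb_kernel_def case_prod_beta by measurable
qed

definition Sb_majorant :: "real \<Rightarrow> real \<times> real \<Rightarrow> real \<times> real \<Rightarrow> real" where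
  "Sb_majorant lam x y = (2/pi) * (sqrt lam / 4) powr (-1/4) * decay_profile (1/4) (sqrt lam / 2) (dist x y)"

lemma Sb_majorant_nonneg: "0 \<le> Sb_majorant lam x y"
  unfolding Sb_majorant_def by (simp add: decay_profile_nonneg)

lemma borel_measurable_Sb_majorant: "(\<lambda>(x, y). Sb_majorant lam x y) \<in> borel_measurable borel"
proof -
  have [measurable]: "(\<lambda>p::(real \<times> real) \<times> (real \<times> real). dist (fst p) (snd p)) \<in> borel_measurable borel"
    by (intro borel_measurable_continuous_onI continuous_intros)
  show ?thesis unfolding Sb_majorant_def case_prod_beta by measurable
qed

lemma norm_Sb_kernel_le_majorant:
  assumes lam: "0 < lam" and xy: "x \<in> halfplane" "y \<in> halfplane" "x \<noteq> y"
  shows "cmod (Sb_kernel b lam x y) \<le> Sb_majorant lam x y"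
proof -
  define r where "r = sqrt lam * dist x y"
  define r' where "r' = sqrt lam * dist x (refl_star y)"
  have r: "0 < r" using lam xy by (simp add: r_def)
  have "r \<le> r'" unfolding r_def r'_def using dist_le_dist_refl_star[OF xy(1,2)] lam
    by (intro mult_left_mono) auto
  \<comment> \<open>the reflected term cannot increase the kernel: K0 is nonnegative and decreasing\<close>
  then have K0_diff: "\<bar>K0 r - K0 r'\<bar> \<le> K0 r"
    using K0_antimono[OF r] K0_nonneg[of r'] by simp
  have "cmod (Sb_kernel b lam x y) = \<bar>K0 r - K0 r'\<bar> / (2 * pi)"
    unfolding Sb_kernel_def r_def r'_def norm_mult norm_exp_i_times norm_of_real by (simp add: abs_mult)
  also have "\<dots> \<le> 4 * (r/4) powr (-1/4) * exp (- r/2) / (2 * pi)"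
    using K0_diff K0_le[OF r] by (intro divide_right_mono) auto
  also have "\<dots> = Sb_majorant lam x y"
    using lam unfolding Sb_majorant_def decay_profile_def r_def
    by (simp add: powr_mult[symmetric] field_simps)
  finally show ?thesis .
qed

lemma nn_integral_mE_decay_profile_bounded:
  assumes "0 \<le> C" "0 \<le> q" "q < 1" "0 < a"
  shows "\<exists>K\<ge>0. \<forall>x. (\<integral>\<^sup>+y. ennreal (C * decay_profile q a (dist x y)) \<partial>mE) \<le> ennreal K"
proof -
  define I where "I = (\<integral>\<^sup>+z. ennreal (C * decay_profile q a (norm z)) \<partial>(lborel :: (real \<times> real) measure))"
  have "I < \<infinity>"
    unfolding I_def using assms nn_integral_decay_profile_norm_finite[of q a]
    by (simp add: ennreal_mult decay_profile_nonneg nn_integral_cmult ennreal_mult_less_top)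
  moreover have "(\<integral>\<^sup>+y. ennreal (C * decay_profile q a (dist x y)) \<partial>mE) \<le> I" for x
    unfolding I_def by (rule nn_integral_mE_dist_le) measurable
  ultimately show ?thesis
    by (intro exI[of _ "enn2real I"]) simp
qed

lemma schur_test_Sb_kernel:
  assumes lam: "0 < lam"
  shows "\<exists>A B. schur_test mE (Sb_kernel b lam) (Sb_majorant lam) A B"
proof -
  define c where "c = (2/pi) * (sqrt lam / 4) powr (-1/4)"
  have H_eq: "Sb_majorant lam x y = c * decay_profile (1/4) (sqrt lam / 2) (dist x y)" for x y
    unfolding Sb_majorant_def c_def ..
  have H_square_eq: "(Sb_majorant lam x y)\<^sup>2 = c\<^sup>2 * decay_profile (1/2) (sqrt lam) (dist x y)" for x y
    unfolding H_eq by (simp add: power_mult_distrib decay_profile_power2)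
  obtain A where A: "0 \<le> A"
      "\<And>x. (\<integral>\<^sup>+y. ennreal (c * decay_profile (1/4) (sqrt lam / 2) (dist x y)) \<partial>mE) \<le> ennreal A"
    using nn_integral_mE_decay_profile_bounded[of c "1/4" "sqrt lam / 2"] lam by (auto simp: c_def)
  obtain B where B: "0 \<le> B"
      "\<And>x. (\<integral>\<^sup>+y. ennreal (c\<^sup>2 * decay_profile (1/2) (sqrt lam) (dist x y)) \<partial>mE) \<le> ennreal B"
    using nn_integral_mE_decay_profile_bounded[of "c\<^sup>2" "1/2" "sqrt lam"] lam by auto
  have "schur_test mE (Sb_kernel b lam) (Sb_majorant lam) A B"
  proof (intro schur_test.intro sigma_finite_mE schur_test_axioms.intro)
    show "(\<lambda>(x, y). Sb_kernel b lam x y) \<in> borel_measurable (mE \<Otimes>\<^sub>M mE)"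
      by (intro borel_measurable_mE_pair borel_measurable_Sb_kernel)
    show "(\<lambda>(x, y). Sb_majorant lam x y) \<in> borel_measurable (mE \<Otimes>\<^sub>M mE)"
      by (intro borel_measurable_mE_pair borel_measurable_Sb_majorant)
    show "0 \<le> Sb_majorant lam x y" for x y
      by (rule Sb_majorant_nonneg)
  next
    fix x assume x: "x \<in> space mE"
    have "AE y in lborel. y \<noteq> x" by (rule AE_lborel_singleton)
    then have "AE y in lborel. y \<in> halfplane \<longrightarrow> cmod (Sb_kernel b lam x y) \<le> Sb_majorant lam x y"
      by eventually_elim (use x lam in \<open>auto intro: norm_Sb_kernel_le_majorant\<close>)
    then show "AE y in mE. cmod (Sb_kernel b lam x y) \<le> Sb_majorant lam x y"
      unfolding mE_def by (subst AE_restrict_space_iff) (simp_all add: sets_halfplane)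
  next
    show "(\<integral>\<^sup>+y. Sb_majorant lam x y \<partial>mE) \<le> ennreal A" if "x \<in> space mE" for x
      unfolding H_eq by (rule A(2))
    show "(\<integral>\<^sup>+x. Sb_majorant lam x y \<partial>mE) \<le> ennreal A" if "y \<in> space mE" for y
      using A(2)[of y] by (simp add: H_eq dist_commute)
    show "(\<integral>\<^sup>+y. (Sb_majorant lam x y)\<^sup>2 \<partial>mE) \<le> ennreal B" if "x \<in> space mE" for x
      unfolding H_square_eq by (rule B(2))
  qed (use A B in auto)
  then show ?thesis by blast
qed

theorem lemmaB2:
  fixes b lam :: real
  assumes "lam > 0"
  shows "bounded_L2_intop mE (Sb_kernel b lam) \<and>
         selfadjoint_L2_intop mE (Sb_kernel b lam) \<and>
         bounded_L2_Linf_intop mE (Sb_kernel b lam)"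
proof -
  obtain A B where "schur_test mE (Sb_kernel b lam) (Sb_majorant lam) A B"
    using schur_test_Sb_kernel[OF assms] by blast
  then interpret schur_test mE "Sb_kernel b lam" "Sb_majorant lam" A B .
  show ?thesis
    using bounded_L2 selfadjoint[OF Sb_kernel_hermitian] bounded_L2_Linf by blast
qed

end
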